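(* Let $\hat f(\mathbf z,\bar{\mathbf z})$ be a mixed polynomial in $\mathbf z=(z_1,z_2)$ and let $f(z_1,\bar z_1)=\hat f(z_1,0,\bar z_1,0)$. Let $g(\mathbf z,\bar{\mathbf z})=z_2$, $C=\{\hat f=0\}$, $C'=\{z_2=0\}$. Let $\alpha\in\mathbb C$ be an isolated root of $f$ and $\hat\alpha=(\alpha,0)$. Then $\hat\alpha\in C\cap C'$ and $I_{top}(C,C';\hat\alpha)=\operatorname{sm}(f,\alpha)$.
   Context: For a mixed polynomial $h(u,\bar u)$ in one variable with isolated root $\alpha$ (i.e. $h(\alpha,\bar\alpha)=0$ and $h\ne0$ near $\alpha$ otherwise), the multiplicity with sign $\operatorname{sm}(h,\alpha)$ is the mapping degree (rotation number) of $h/|h|:S^1_\varepsilon(\alpha)\to S^1$ for small $\varepsilon>0$, where $S^1_\varepsilon(\alpha)=\{|u-\alpha|=\varepsilon\}$ is oriented counterclockwise. For an isolated point $P$ of $C\cap C'$, identifying $\mathbb C^2$ with $\mathbb R^4$ via $z_j=x_j+iy_j$ (standard orientation) and writing $\hat f=\hat f_{\mathbb R}+i\hat f_I$, $g=g_{\mathbb R}+ig_I$, $I_{top}(C,C';P)$ is the mapping degree of $\varphi/\|\varphi\|:S^3_\varepsilon(P)\to S^3$ with $\varphi=(\hat f_{\mathbb R},\hat f_I,g_{\mathbb R},g_I)$ and $S^3_\varepsilon(P)$ the boundary of a small ball around $P$ containing no other intersection point. *)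

theory Defs
  imports "HOL-Analysis.Analysis" "HOL-Homology.Homology"
begin

text \<open>A mixed polynomial in z = (z1,z2) is given by finitely supported complex
coefficients c(a,b,p,q) of the monomials z1^a z2^b conj(z1)^p conj(z2)^q.\<close>

type_synonym mixed_poly2 = "nat \<times> nat \<times> nat \<times> nat \<Rightarrow> complex"

definition mixed_poly2 :: "mixed_poly2 \<Rightarrow> bool" where
  "mixed_poly2 c \<longleftrightarrow> finite {m. c m \<noteq> 0}"

definition meval2 :: "mixed_poly2 \<Rightarrow> complex \<Rightarrow> complex \<Rightarrow> complex" where
  "meval2 c z1 z2 = (\<Sum>(a,b,p,q)\<in>{m. c m \<noteq> 0}.
      c (a,b,p,q) * z1 ^ a * z2 ^ b * cnj z1 ^ p * cnj z2 ^ q)"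

definition isolated_root :: "(complex \<Rightarrow> complex) \<Rightarrow> complex \<Rightarrow> bool" where
  "isolated_root h \<alpha> \<longleftrightarrow> h \<alpha> = 0 \<and>
     (\<exists>e>0. \<forall>u. 0 < cmod (u - \<alpha>) \<and> cmod (u - \<alpha>) < e \<longrightarrow> h u \<noteq> 0)"

text \<open>Degree of h/|h| on the circle |u - alpha| = eps, via the Brouwer degree of
the induced self-map of the standard 1-sphere (coordinates (Re, Im), standard
counterclockwise orientation on both sides).\<close>
definition circle_deg :: "(complex \<Rightarrow> complex) \<Rightarrow> complex \<Rightarrow> real \<Rightarrow> int" where
  "circle_deg h \<alpha> \<epsilon> = Brouwer_degree2 1 (\<lambda>x.
     let w = h (\<alpha> + of_real \<epsilon> * Complex (x 0) (x 1)); v = w / of_real (cmod w)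
     in (\<lambda>i. if i = 0 then Re v else if i = 1 then Im v else 0))"

definition sm :: "(complex \<Rightarrow> complex) \<Rightarrow> complex \<Rightarrow> int" where
  "sm h \<alpha> = (THE d. \<forall>\<^sub>F \<epsilon> in at_right 0. circle_deg h \<alpha> \<epsilon> = d)"

text \<open>Degree of phi/||phi|| on the 3-sphere of radius eps around P = (P1,P2), where
C^2 = R^4 via (x1,y1,x2,y2) and phi = (Re F, Im F, Re G, Im G).\<close>
definition sphere3_deg :: "(complex \<Rightarrow> complex \<Rightarrow> complex) \<Rightarrow> (complex \<Rightarrow> complex \<Rightarrow> complex)
     \<Rightarrow> complex \<times> complex \<Rightarrow> real \<Rightarrow> int" where
  "sphere3_deg F G P \<epsilon> = Brouwer_degree2 3 (\<lambda>x.
     let z1 = fst P + of_real \<epsilon> * Complex (x 0) (x 1);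
         z2 = snd P + of_real \<epsilon> * Complex (x 2) (x 3);
         u = F z1 z2; w = G z1 z2;
         n = sqrt ((Re u)\<^sup>2 + (Im u)\<^sup>2 + (Re w)\<^sup>2 + (Im w)\<^sup>2)
     in (\<lambda>i. if i = 0 then Re u / n else if i = 1 then Im u / n
             else if i = 2 then Re w / n else if i = 3 then Im w / n else 0))"

definition I_top :: "(complex \<Rightarrow> complex \<Rightarrow> complex) \<Rightarrow> (complex \<Rightarrow> complex \<Rightarrow> complex)
     \<Rightarrow> complex \<times> complex \<Rightarrow> int" where
  "I_top F G P = (THE d. \<forall>\<^sub>F \<epsilon> in at_right 0. sphere3_deg F G P \<epsilon> = d)"

end

theory Submission
  imports Defs
begin

text \<open>
  With G = z2 and P = (alpha, 0), the last two coordinates of phi/||phi|| on the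
  3-sphere are positive multiples of the last two coordinates of the point.
  A self-map of S^(n+1) preserving the sign of the last coordinate has the same
  degree as its restriction to the equator S^n (suspension invariance of the degree),
  so the degree on S^3 equals the degree of the restriction to the circle
  z2 = 0, which is precisely the circle map defining sm(f, alpha).
\<close>

lemma int_pow_transfer_surjective_hom:
  assumes "group Q" "group R" "i \<in> hom Q R" "i ` carrier Q = carrier R"
    and "\<And>u. u \<in> carrier Q \<Longrightarrow> \<phi> u = u [^]\<^bsub>Q\<^esub> (d::int)"
    and "\<And>u. u \<in> carrier Q \<Longrightarrow> i (\<phi> u) = \<psi> (i u)"
    and "r \<in> carrier R"
  shows "\<psi> r = r [^]\<^bsub>R\<^esub> d"
proof -
  have "group_hom Q R i"
    using assms(1-3) by (simp add: group_hom_def group_hom_axioms_def)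
  moreover obtain u where u: "u \<in> carrier Q" "r = i u"
    using assms(4,7) by blast
  ultimately show ?thesis
    using assms(5,6) by (simp add: group_hom.hom_int_pow)
qed

lemma int_pow_transfer_injective_hom:
  assumes "group G" "group R" "j \<in> hom G R" "inj_on j (carrier G)"
    and "\<And>r. r \<in> carrier R \<Longrightarrow> \<psi> r = r [^]\<^bsub>R\<^esub> (d::int)"
    and "\<And>y. y \<in> carrier G \<Longrightarrow> j (\<phi> y) = \<psi> (j y)"
    and "\<And>y. y \<in> carrier G \<Longrightarrow> \<phi> y \<in> carrier G"
    and "y \<in> carrier G"
  shows "\<phi> y = y [^]\<^bsub>G\<^esub> d"
proof -
  have hom: "group_hom G R j"
    using assms(1-3) by (simp add: group_hom_def group_hom_axioms_def)
  have "j (\<phi> y) = j (y [^]\<^bsub>G\<^esub> d)"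
    using assms(3,5,6,8) hom_in_carrier group_hom.hom_int_pow [OF hom] by metis
  then show ?thesis
    using assms(4,7,8) group.int_pow_closed [OF assms(1)] by (meson inj_onD)
qed

lemma hom_induced_inclusion_natural:
  assumes "continuous_map X X f" "f \<in> S \<rightarrow> S" "continuous_map Y Y f" "f \<in> T \<rightarrow> T"
    and "continuous_map X Y id" "S \<subseteq> T"
  shows "hom_induced p X S Y T id (hom_induced p X S X S f a)
       = hom_induced p Y T Y T f (hom_induced p X S Y T id a)"
proof -
  have "id \<in> S \<rightarrow> T"
    using assms(6) by auto
  then show ?thesis
    using hom_induced_compose' [of X X f S S Y id T p a] hom_induced_compose' [of X Y id S T Y f T p a]
    using assms(1-5) by simp
qed

lemma hom_induced_upper_hemisphere_Brouwer_degree2: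
  fixes f :: "(nat \<Rightarrow> real) \<Rightarrow> nat \<Rightarrow> real" and n :: nat
  defines "U \<equiv> subtopology (nsphere (Suc n)) {x. x (Suc n) \<ge> 0}"
    and "E \<equiv> {x. x (Suc n) = 0}"
  assumes cf: "continuous_map (nsphere (Suc n)) (nsphere (Suc n)) f"
    and upper: "f \<in> {x. x (Suc n) \<ge> 0} \<rightarrow> {x. x (Suc n) \<ge> 0}"
    and equator: "f \<in> E \<rightarrow> E"
    and u: "u \<in> carrier (relative_homology_group (int (Suc n)) U E)"
  shows "hom_induced (int (Suc n)) U E U E f u
       = u [^]\<^bsub>relative_homology_group (int (Suc n)) U E\<^esub> Brouwer_degree2 n f"
proof (rule int_pow_transfer_injective_hom [OF _ _ _ _ _ _ _ u])
  let ?b = "hom_boundary (int (Suc n)) U E"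
  have "subtopology U E = nsphere n"
  proof -
    have "{x. 0 \<le> x (Suc n)} \<inter> E = E" by (auto simp: E_def)
    then show ?thesis
      by (simp add: U_def E_def subtopology_nsphere_equator subtopology_subtopology)
  qed
  moreover have "continuous_map U U f"
    using cf upper
    by (auto simp: U_def continuous_map_in_subtopology continuous_map_from_subtopology Pi_iff)
  ultimately show "?b (hom_induced (int (Suc n)) U E U E f v)
      = hom_induced (int n) (nsphere n) {} (nsphere n) {} f (?b v)" for v
    using fun_cong [OF naturality_hom_induced [OF _ equator, of U U "int (Suc n)"], of v] by simp
  show "?b \<in> hom (relative_homology_group (int (Suc n)) U E) (reduced_homology_group (int n) (nsphere n))"
    and "inj_on ?b (carrier (relative_homology_group (int (Suc n)) U E))"
    using iso_upper_hemisphere_reduced_homology_group [of n n]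
    by (simp_all add: U_def E_def add.commute iso_iff)
qed (simp_all add: hom_induced_carrier Brouwer_degree2)

text \<open>
  The degree is transported along the isomorphisms
  H~(S^(n+1)) = H(S^(n+1), lower hemisphere) = H(upper hemisphere, equator) = H~(S^n),
  all of which commute with the maps induced by f.
\<close>

lemma Brouwer_degree2_suspension_hemispheres:
  fixes f :: "(nat \<Rightarrow> real) \<Rightarrow> nat \<Rightarrow> real"
  assumes cf: "continuous_map (nsphere (Suc n)) (nsphere (Suc n)) f"
    and upper: "f \<in> {x. x (Suc n) \<ge> 0} \<rightarrow> {x. x (Suc n) \<ge> 0}"
    and lower: "f \<in> {x. x (Suc n) \<le> 0} \<rightarrow> {x. x (Suc n) \<le> 0}"
  shows "Brouwer_degree2 (Suc n) f = Brouwer_degree2 n f"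
proof -
  let ?S = "nsphere (Suc n)" and ?q = "int (Suc n)"
  define U where "U = subtopology ?S {x. x (Suc n) \<ge> 0}"
  define E where "E = {x::nat\<Rightarrow>real. x (Suc n) = 0}"
  define L where "L = {x::nat\<Rightarrow>real. x (Suc n) \<le> 0}"
  define G where "G = reduced_homology_group ?q ?S"
  define R where "R = relative_homology_group ?q ?S L"
  define Q where "Q = relative_homology_group ?q U E"
  define d where "d = Brouwer_degree2 n f"
  have fE: "f \<in> E \<rightarrow> E"
    using upper lower by (force simp: E_def Pi_iff intro: order.antisym)
  have fL: "f \<in> L \<rightarrow> L"
    using lower by (simp add: L_def)
  have cU: "continuous_map U U f"
    using cf upper
    by (auto simp: U_def continuous_map_in_subtopology continuous_map_from_subtopology Pi_iff)
  have "\<forall>r\<in>carrier R. hom_induced ?q ?S L ?S L f r = r [^]\<^bsub>R\<^esub> d"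
  proof (intro ballI int_pow_transfer_surjective_hom [where i = "hom_induced ?q U E ?S L id" and Q = Q])
    show "hom_induced ?q U E U E f u = u [^]\<^bsub>Q\<^esub> d" if "u \<in> carrier Q" for u
      using hom_induced_upper_hemisphere_Brouwer_degree2 [OF cf upper] fE that
      by (simp add: Q_def U_def E_def d_def)
    show "hom_induced ?q U E ?S L id (hom_induced ?q U E U E f u)
        = hom_induced ?q ?S L ?S L f (hom_induced ?q U E ?S L id u)" for u
      by (rule hom_induced_inclusion_natural)
         (use cU fE cf fL in \<open>auto simp: U_def E_def L_def continuous_map_from_subtopology\<close>)
  qed (use iso_relative_homology_group_upper_hemisphere [of ?q "Suc n" "Suc n"]
       in \<open>auto simp: Q_def R_def U_def E_def L_def iso_iff\<close>)
  then have "\<forall>y\<in>carrier G. hom_induced ?q ?S {} ?S {} f y = y [^]\<^bsub>G\<^esub> d"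
  proof (intro ballI int_pow_transfer_injective_hom [where j = "hom_induced ?q ?S {} ?S L id" and R = R])
    show "hom_induced ?q ?S {} ?S L id (hom_induced ?q ?S {} ?S {} f y)
        = hom_induced ?q ?S L ?S L f (hom_induced ?q ?S {} ?S L id y)" for y
      by (rule hom_induced_inclusion_natural) (use cf fL in auto)
  qed (use iso_reduced_homology_group_lower_hemisphere [of "Suc n" "Suc n" ?q]
       in \<open>auto simp: G_def R_def L_def iso_iff hom_induced_reduced\<close>)
  then show ?thesis
    unfolding d_def G_def by (intro Brouwer_degree2_unique [OF cf]) simp
qed

lemma continuous_map_nsphere_equator:
  assumes "continuous_map (nsphere (Suc n)) (nsphere (Suc n)) f"
    and "\<And>x. x \<in> topspace (nsphere (Suc n)) \<Longrightarrow> x (Suc n) = 0 \<Longrightarrow> f x (Suc n) = 0"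
  shows "continuous_map (nsphere n) (nsphere n) f"
proof -
  have "continuous_map (subtopology (nsphere (Suc n)) {x. x (Suc n) = 0})
      (subtopology (nsphere (Suc n)) {x. x (Suc n) = 0}) f"
    using assms by (auto simp: continuous_map_in_subtopology continuous_map_from_subtopology)
  then show ?thesis
    by (simp add: subtopology_nsphere_equator)
qed

lemma Brouwer_degree2_suspension:
  fixes f :: "(nat \<Rightarrow> real) \<Rightarrow> nat \<Rightarrow> real"
  assumes cf: "continuous_map (nsphere (Suc n)) (nsphere (Suc n)) f"
    and sgn: "\<And>x. x \<in> topspace (nsphere (Suc n)) \<Longrightarrow> sgn (f x (Suc n)) = sgn (x (Suc n))"
  shows "Brouwer_degree2 (Suc n) f = Brouwer_degree2 n f"
proof -
  \<comment> \<open>off the sphere g is the identity, so the hemisphere conditions hold everywhere\<close>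
  define g where "g x = (if x \<in> topspace (nsphere (Suc n)) then f x else x)" for x
  have "Brouwer_degree2 (Suc n) g = Brouwer_degree2 n g"
  proof (rule Brouwer_degree2_suspension_hemispheres)
    show "continuous_map (nsphere (Suc n)) (nsphere (Suc n)) g"
      using cf by (rule continuous_map_eq) (simp add: g_def)
    show "g \<in> {x. x (Suc n) \<ge> 0} \<rightarrow> {x. x (Suc n) \<ge> 0}"
      using sgn by (auto simp: g_def) (metis sgn_less not_le)
    show "g \<in> {x. x (Suc n) \<le> 0} \<rightarrow> {x. x (Suc n) \<le> 0}"
      using sgn by (auto simp: g_def) (metis sgn_greater not_le)
  qed
  moreover have "topspace (nsphere n) \<subseteq> topspace (nsphere (Suc n))"
    using subtopology_nsphere_equator [of n] by (metis topspace_subtopology inf_le1)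
  ultimately show ?thesis
    by (metis Brouwer_degree2_eq g_def subsetD)
qed

lemma Brouwer_degree2_3_eq_1:
  fixes f :: "(nat \<Rightarrow> real) \<Rightarrow> nat \<Rightarrow> real"
  assumes cf: "continuous_map (nsphere 3) (nsphere 3) f"
    and sgn2: "\<And>x. x \<in> topspace (nsphere 2) \<Longrightarrow> sgn (f x 2) = sgn (x 2)"
    and sgn3: "\<And>x. x \<in> topspace (nsphere 3) \<Longrightarrow> sgn (f x 3) = sgn (x 3)"
  shows "Brouwer_degree2 3 f = Brouwer_degree2 1 f"
proof -
  have "f x 3 = 0" if "x \<in> topspace (nsphere 3)" "x 3 = 0" for x
    using sgn3 [OF that(1)] that(2) by (simp add: sgn_0_0)
  then have "continuous_map (nsphere 2) (nsphere 2) f"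
    using continuous_map_nsphere_equator [of 2 f] cf by (simp add: numeral_3_eq_3)
  then have "Brouwer_degree2 2 f = Brouwer_degree2 1 f"
    using Brouwer_degree2_suspension [of 1 f] sgn2 by (simp add: numeral_2_eq_2)
  moreover have "Brouwer_degree2 3 f = Brouwer_degree2 2 f"
    using Brouwer_degree2_suspension [of 2 f] cf sgn3 by (simp add: numeral_3_eq_3)
  ultimately show ?thesis by simp
qed

lemma continuous_map_compose_continuous_on2:
  fixes F :: "'b::t2_space \<Rightarrow> 'c::t2_space \<Rightarrow> 'd::t2_space"
  assumes F: "continuous_on UNIV (\<lambda>z. F (fst z) (snd z))"
    and f: "continuous_map X euclidean f" and g: "continuous_map X euclidean g"
  shows "continuous_map X euclidean (\<lambda>x. F (f x) (g x))"
proof -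
  have "((\<lambda>y. F (f y) (g y)) \<longlongrightarrow> F (f x) (g x)) (atin X x)" if "x \<in> topspace X" for x
  proof -
    have "((\<lambda>y. (f y, g y)) \<longlongrightarrow> (f x, g x)) (atin X x)"
      using f g that by (simp add: continuous_map_atin tendsto_Pair)
    from isCont_tendsto_compose [OF _ this, of "\<lambda>z. F (fst z) (snd z)"] show ?thesis
      using F by (simp add: continuous_on_eq_continuous_at)
  qed
  then show ?thesis
    by (simp add: continuous_map_atin)
qed

lemma continuous_map_nsphere_complex_coordinate:
  "continuous_map (nsphere p) euclidean (\<lambda>x. a + of_real r * Complex (x i) (x j))"
proof -
  have "((\<lambda>y. y k) \<longlongrightarrow> x k) (atin (nsphere p) x)" if "x \<in> topspace (nsphere p)" for k x
    using continuous_map_nsphere_projection [of p k] that by (simp add: continuous_map_atin)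
  then show ?thesis
    by (simp add: continuous_map_atin tendsto_intros)
qed

definition normalize_pair :: "complex \<Rightarrow> complex \<Rightarrow> nat \<Rightarrow> real" where
  "normalize_pair u w =
     (let n = sqrt ((Re u)\<^sup>2 + (Im u)\<^sup>2 + (Re w)\<^sup>2 + (Im w)\<^sup>2)
      in (\<lambda>i. if i = 0 then Re u / n else if i = 1 then Im u / n
              else if i = 2 then Re w / n else if i = 3 then Im w / n else 0))"

lemma topspace_nsphere3:
  "x \<in> topspace (nsphere 3) \<longleftrightarrow> (x 0)\<^sup>2 + (x 1)\<^sup>2 + (x 2)\<^sup>2 + (x 3)\<^sup>2 = 1 \<and> (\<forall>i>3. x i = 0)"
  by (simp add: nsphere eval_nat_numeral add.assoc)

lemma normalize_pair_in_nsphere3: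
  assumes "u \<noteq> 0 \<or> w \<noteq> 0"
  shows "normalize_pair u w \<in> topspace (nsphere 3)"
proof -
  define s where "s = (Re u)\<^sup>2 + (Im u)\<^sup>2 + (Re w)\<^sup>2 + (Im w)\<^sup>2"
  have "s > 0"
    using assms by (auto simp: s_def complex_eq_iff add_pos_nonneg add_nonneg_pos)
  then show ?thesis
    by (simp add: normalize_pair_def Let_def topspace_nsphere3 power_divide flip: s_def add_divide_distrib)
qed

lemma sgn_normalize_pair:
  "sgn (normalize_pair u w 2) = sgn (Re w)" "sgn (normalize_pair u w 3) = sgn (Im w)"
proof -
  have sgn_quotient: "sgn (a / sqrt (b + a\<^sup>2)) = sgn a" if "b \<ge> 0" for a b :: real
  proof (cases "a = 0")
    case False
    then have "sqrt (b + a\<^sup>2) > 0"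
      using that by (simp add: add_nonneg_pos)
    then show ?thesis by simp
  qed simp
  show "sgn (normalize_pair u w 2) = sgn (Re w)"
    using sgn_quotient [of "(Re u)\<^sup>2 + (Im u)\<^sup>2 + (Im w)\<^sup>2" "Re w"]
    by (simp add: normalize_pair_def Let_def algebra_simps)
  show "sgn (normalize_pair u w 3) = sgn (Im w)"
    using sgn_quotient [of "(Re u)\<^sup>2 + (Im u)\<^sup>2 + (Re w)\<^sup>2" "Im w"]
    by (simp add: normalize_pair_def Let_def algebra_simps)
qed

lemma normalize_pair_zero_right:
  "normalize_pair u 0 = (let v = u / of_real (cmod u) in (\<lambda>i. if i = 0 then Re v else if i = 1 then Im v else 0))"
  by (simp add: normalize_pair_def Let_def cmod_def fun_eq_iff)

lemma tendsto_normalize_pair: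
  assumes "(f \<longlongrightarrow> u) F" "(g \<longlongrightarrow> w) F" "u \<noteq> 0 \<or> w \<noteq> 0"
  shows "((\<lambda>x. normalize_pair (f x) (g x) k) \<longlongrightarrow> normalize_pair u w k) F"
proof -
  have "(Re u)\<^sup>2 + (Im u)\<^sup>2 + (Re w)\<^sup>2 + (Im w)\<^sup>2 \<noteq> 0"
    using assms(3) by (auto simp: complex_eq_iff add_nonneg_eq_0_iff)
  then show ?thesis
    by (simp add: normalize_pair_def Let_def tendsto_intros assms(1,2))
qed

lemma continuous_map_normalize_pair:
  fixes f g :: "'a \<Rightarrow> complex"
  assumes f: "continuous_map X euclidean f" and g: "continuous_map X euclidean g"
    and nonzero: "\<And>x. x \<in> topspace X \<Longrightarrow> f x \<noteq> 0 \<or> g x \<noteq> 0"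
  shows "continuous_map X (nsphere 3) (\<lambda>x. normalize_pair (f x) (g x))"
proof -
  have "continuous_map X euclideanreal (\<lambda>x. normalize_pair (f x) (g x) k)" for k
    using f g nonzero by (auto simp: continuous_map_atin intro: tendsto_normalize_pair)
  then have "continuous_map X (powertop_real UNIV) (\<lambda>x. normalize_pair (f x) (g x))"
    by (simp add: continuous_map_componentwise_UNIV)
  then show ?thesis
    using nonzero normalize_pair_in_nsphere3
    by (simp add: nsphere [of 3] continuous_map_in_subtopology del: nsphere)
qed

lemma sphere3_deg_eq_normalize_pair:
  "sphere3_deg F G P \<epsilon> = Brouwer_degree2 3 (\<lambda>x.
     let z1 = fst P + of_real \<epsilon> * Complex (x 0) (x 1);
         z2 = snd P + of_real \<epsilon> * Complex (x 2) (x 3)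
     in normalize_pair (F z1 z2) (G z1 z2))"
  by (simp add: sphere3_deg_def normalize_pair_def Let_def)

lemma sphere3_deg_second_coordinate:
  fixes F :: "complex \<Rightarrow> complex \<Rightarrow> complex"
  assumes F: "continuous_on UNIV (\<lambda>z. F (fst z) (snd z))"
    and \<epsilon>: "\<epsilon> > 0"
    and nonzero: "\<And>z. cmod (z - \<alpha>) = \<epsilon> \<Longrightarrow> F z 0 \<noteq> 0"
  shows "sphere3_deg F (\<lambda>z1 z2. z2) (\<alpha>, 0) \<epsilon> = circle_deg (\<lambda>z. F z 0) \<alpha> \<epsilon>"
proof -
  define z1 where "z1 x = \<alpha> + of_real \<epsilon> * Complex (x 0) (x 1)" for x :: "nat \<Rightarrow> real"
  define z2 where "z2 x = 0 + of_real \<epsilon> * Complex (x 2) (x 3)" for x :: "nat \<Rightarrow> real"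
  define \<Phi> where "\<Phi> = (\<lambda>x. normalize_pair (F (z1 x) (z2 x)) (z2 x))"
  have Re_Im_z2: "Re (z2 x) = \<epsilon> * x 2" "Im (z2 x) = \<epsilon> * x 3" for x
    by (simp_all add: z2_def)
  have "F (z1 x) (z2 x) \<noteq> 0 \<or> z2 x \<noteq> 0" if "x \<in> topspace (nsphere 3)" for x
  proof (cases "z2 x = 0")
    case True
    then have "x 2 = 0" "x 3 = 0"
      using \<epsilon> Re_Im_z2 [of x] by auto
    then have "cmod (Complex (x 0) (x 1)) = 1"
      using that by (simp add: topspace_nsphere3 cmod_def)
    then have "cmod (z1 x - \<alpha>) = \<epsilon>"
      using \<epsilon> by (simp add: z1_def norm_mult)
    with True show ?thesis
      using nonzero by simp
  qed simp
  then have "continuous_map (nsphere 3) (nsphere 3) \<Phi>"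
    unfolding \<Phi>_def z1_def z2_def
    by (intro continuous_map_normalize_pair continuous_map_compose_continuous_on2 [OF F]
        continuous_map_nsphere_complex_coordinate)
  moreover have "sgn (\<Phi> x 2) = sgn (x 2)" "sgn (\<Phi> x 3) = sgn (x 3)" for x
    using \<epsilon> by (simp_all add: \<Phi>_def sgn_normalize_pair Re_Im_z2 sgn_mult)
  ultimately have "Brouwer_degree2 3 \<Phi> = Brouwer_degree2 1 \<Phi>"
    by (intro Brouwer_degree2_3_eq_1)
  also have "\<dots> = circle_deg (\<lambda>z. F z 0) \<alpha> \<epsilon>"
    unfolding circle_deg_def
  proof (rule Brouwer_degree2_eq)
    fix x assume "x \<in> topspace (nsphere 1)"
    then have "z2 x = 0"
      by (simp add: nsphere z2_def complex_eq_iff)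
    then show "\<Phi> x = (let w = F (\<alpha> + of_real \<epsilon> * Complex (x 0) (x 1)) 0; v = w / of_real (cmod w)
        in (\<lambda>i. if i = 0 then Re v else if i = 1 then Im v else 0))"
      by (simp add: \<Phi>_def z1_def normalize_pair_zero_right Let_def)
  qed
  finally show ?thesis
    by (simp add: sphere3_deg_eq_normalize_pair \<Phi>_def z1_def z2_def Let_def)
qed

lemma continuous_on_meval2: "continuous_on UNIV (\<lambda>z. meval2 c (fst z) (snd z))"
  unfolding meval2_def case_prod_beta by (intro continuous_intros)

lemma The_eventually_eq_cong:
  assumes "eventually (\<lambda>x. f x = g x) F"
  shows "(THE d. eventually (\<lambda>x. f x = d) F) = (THE d. eventually (\<lambda>x. g x = d) F)"
proof -
  have "eventually (\<lambda>x. f x = d) F \<longleftrightarrow> eventually (\<lambda>x. g x = d) F" for d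
    using assms by (auto elim: eventually_elim2)
  then show ?thesis by simp
qed

theorem lemma8:
  fixes c :: mixed_poly2 and \<alpha> :: complex
  assumes "mixed_poly2 c"
    and "isolated_root (\<lambda>z1. meval2 c z1 0) \<alpha>"
  shows "(\<alpha>, 0) \<in> {(z1, z2). meval2 c z1 z2 = 0} \<inter> {(z1, z2). z2 = 0}
    \<and> I_top (meval2 c) (\<lambda>z1 z2. z2) (\<alpha>, 0) = sm (\<lambda>z1. meval2 c z1 0) \<alpha>"
proof -
  obtain e where "e > 0" and root: "meval2 c \<alpha> 0 = 0"
    and isolated: "\<And>u. 0 < cmod (u - \<alpha>) \<Longrightarrow> cmod (u - \<alpha>) < e \<Longrightarrow> meval2 c u 0 \<noteq> 0"
    using assms(2) unfolding isolated_root_def by blast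
  have "\<forall>\<^sub>F \<epsilon> in at_right 0.
      sphere3_deg (meval2 c) (\<lambda>z1 z2. z2) (\<alpha>, 0) \<epsilon> = circle_deg (\<lambda>z1. meval2 c z1 0) \<alpha> \<epsilon>"
    unfolding eventually_at_right_field
    using \<open>e > 0\<close> isolated by (auto intro!: exI [of _ e] sphere3_deg_second_coordinate continuous_on_meval2)
  then have "I_top (meval2 c) (\<lambda>z1 z2. z2) (\<alpha>, 0) = sm (\<lambda>z1. meval2 c z1 0) \<alpha>"
    unfolding I_top_def sm_def by (rule The_eventually_eq_cong)
  with root show ?thesis by simp
qed

end
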